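(* Let $G$ be a finite group acting linearly on a finite-dimensional complex vector space $V$, and fix a norm on $V$. Let $I\subseteq\mathbb{R}$ be an interval and $c:I\to V/\!\!/G=\sigma(V)\subseteq\mathbb{C}^n$ continuous. If $c$ admits a Lipschitz lift $\tilde c:I\to V$ (i.e. $\sigma\circ\tilde c=c$), then every continuous lift $\bar c:I\to V$ of $c$ is Lipschitz.
   Context: $\sigma=(\sigma_1,\dots,\sigma_n)$ where $\sigma_1,\dots,\sigma_n$ are homogeneous generators of the algebra $\mathbb{C}[V]^G$ of $G$-invariant polynomials; $V/\!\!/G$ is identified with $\sigma(V)\subseteq\mathbb{C}^n$. A lift of $c$ is a curve $\bar c$ in $V$ with $\sigma\circ\bar c=c$. *)

theory Defs
  imports "HOL-Analysis.Analysis" "HOL-Algebra.Group"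
begin

inductive cpoly_fun :: "(complex ^ 'n \<Rightarrow> complex) \<Rightarrow> bool" where
  const: "cpoly_fun (\<lambda>x. a)"
| coord: "cpoly_fun (\<lambda>x. x $ i)"
| add: "cpoly_fun f \<Longrightarrow> cpoly_fun g \<Longrightarrow> cpoly_fun (\<lambda>x. f x + g x)"
| mult: "cpoly_fun f \<Longrightarrow> cpoly_fun g \<Longrightarrow> cpoly_fun (\<lambda>x. f x * g x)"

text \<open>Homogeneous of degree d (for polynomial functions over C this is the same as
  being a homogeneous polynomial of degree d).\<close>
definition homogeneous_of_degree :: "nat \<Rightarrow> (complex ^ 'n \<Rightarrow> complex) \<Rightarrow> bool" where
  "homogeneous_of_degree d f \<longleftrightarrow> (\<forall>a x. f (a *s x) = a ^ d * f x)"

definition linear_action :: "('g, 'b) monoid_scheme \<Rightarrow> ('g \<Rightarrow> complex ^ 'n \<Rightarrow> complex ^ 'n) \<Rightarrow> bool" where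
  "linear_action G \<phi> \<longleftrightarrow>
     (\<forall>g\<in>carrier G. (\<forall>x y. \<phi> g (x + y) = \<phi> g x + \<phi> g y) \<and> (\<forall>a x. \<phi> g (a *s x) = a *s \<phi> g x))
   \<and> \<phi> \<one>\<^bsub>G\<^esub> = id
   \<and> (\<forall>g\<in>carrier G. \<forall>h\<in>carrier G. \<phi> (g \<otimes>\<^bsub>G\<^esub> h) = \<phi> g \<circ> \<phi> h)"

definition invariant_fun :: "('g, 'b) monoid_scheme \<Rightarrow> ('g \<Rightarrow> complex ^ 'n \<Rightarrow> complex ^ 'n) \<Rightarrow> (complex ^ 'n \<Rightarrow> complex) \<Rightarrow> bool" where
  "invariant_fun G \<phi> f \<longleftrightarrow> (\<forall>g\<in>carrier G. \<forall>x. f (\<phi> g x) = f x)"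

text \<open>sigma = (sigma_1,...,sigma_m) is a system of homogeneous generators of the algebra
  C[V]^G of invariant polynomials: each sigma_i is an invariant homogeneous polynomial,
  and every invariant polynomial is a polynomial in sigma_1,...,sigma_m.\<close>
definition hilbert_map :: "('g, 'b) monoid_scheme \<Rightarrow> ('g \<Rightarrow> complex ^ 'n \<Rightarrow> complex ^ 'n)
    \<Rightarrow> (complex ^ 'n \<Rightarrow> complex ^ 'm) \<Rightarrow> bool" where
  "hilbert_map G \<phi> \<sigma> \<longleftrightarrow>
     (\<forall>i. cpoly_fun (\<lambda>x. \<sigma> x $ i) \<and> invariant_fun G \<phi> (\<lambda>x. \<sigma> x $ i)
          \<and> (\<exists>d. homogeneous_of_degree d (\<lambda>x. \<sigma> x $ i)))
   \<and> (\<forall>f. cpoly_fun f \<and> invariant_fun G \<phi> f \<longrightarrow>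
          (\<exists>P :: complex ^ 'm \<Rightarrow> complex. cpoly_fun P \<and> (\<forall>x. f x = P (\<sigma> x))))"

definition is_norm :: "(complex ^ 'n \<Rightarrow> real) \<Rightarrow> bool" where
  "is_norm N \<longleftrightarrow> (\<forall>x. N x = 0 \<longleftrightarrow> x = 0)
     \<and> (\<forall>x y. N (x + y) \<le> N x + N y)
     \<and> (\<forall>a x. N (a *s x) = cmod a * N x)"

definition lipschitz_wrt :: "(complex ^ 'n \<Rightarrow> real) \<Rightarrow> real set \<Rightarrow> (real \<Rightarrow> complex ^ 'n) \<Rightarrow> bool" where
  "lipschitz_wrt N I f \<longleftrightarrow> (\<exists>L. \<forall>s\<in>I. \<forall>t\<in>I. N (f s - f t) \<le> L * \<bar>s - t\<bar>)"

end

theory Submission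
  imports Defs
begin

(* Let x(t) = c_tilde(t) be the given Lipschitz lift and y(t) = c_bar(t) any continuous lift.
   Since sigma separates G-orbits, y(t) = g_t x(t) for some g_t in the finite group G.
   Near a parameter u, continuity of y and Lipschitz continuity of x force g_v x(u) = g_u x(u):
   the orbit G x(u) is a finite set, so distinct orbit points are a fixed distance apart.
   Hence y(v) - y(u) = g_v (x(v) - x(u)), and the uniform bound |g v| <= K |v| gives the local
   estimate |y(v) - y(u)| <= K L |v - u|; on an interval a local Lipschitz estimate with a
   uniform constant is a global one. *)

lemma cpoly_fun_diff: "cpoly_fun f \<Longrightarrow> cpoly_fun g \<Longrightarrow> cpoly_fun (\<lambda>x. f x - g x)"
  using cpoly_fun.add[OF _ cpoly_fun.mult[OF cpoly_fun.const[of "- 1"]], of f g] by simp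

lemma cpoly_fun_sum:
  "finite S \<Longrightarrow> (\<And>i. i \<in> S \<Longrightarrow> cpoly_fun (f i)) \<Longrightarrow> cpoly_fun (\<lambda>x. \<Sum>i\<in>S. f i x)"
proof (induction S rule: finite_induct)
  case empty
  then show ?case using cpoly_fun.const[of 0] by simp
next
  case (insert a S)
  then show ?case using cpoly_fun.add[of "f a" "\<lambda>x. \<Sum>i\<in>S. f i x"] by simp
qed

lemma cpoly_fun_prod:
  "finite S \<Longrightarrow> (\<And>i. i \<in> S \<Longrightarrow> cpoly_fun (f i)) \<Longrightarrow> cpoly_fun (\<lambda>x. \<Prod>i\<in>S. f i x)"
proof (induction S rule: finite_induct)
  case empty
  then show ?case using cpoly_fun.const[of 1] by simp
next
  case (insert a S)
  then show ?case using cpoly_fun.mult[of "f a" "\<lambda>x. \<Prod>i\<in>S. f i x"] by simp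
qed

lemma cpoly_fun_compose:
  "cpoly_fun f \<Longrightarrow> (\<And>i. cpoly_fun (\<lambda>x. h x $ i)) \<Longrightarrow> cpoly_fun (\<lambda>x. f (h x))"
  by (induction f rule: cpoly_fun.induct) (auto intro: cpoly_fun.intros)

lemma cpoly_fun_separates_points:
  assumes "(a :: complex ^ 'n) \<noteq> b"
  shows "\<exists>l. cpoly_fun l \<and> l a = 1 \<and> l b = 0"
proof -
  obtain i where i: "a $ i \<noteq> b $ i" using assms by (auto simp: vec_eq_iff)
  define l where "l = (\<lambda>x :: complex ^ 'n. (x $ i - b $ i) * inverse (a $ i - b $ i))"
  have "cpoly_fun l"
    unfolding l_def by (intro cpoly_fun.mult cpoly_fun_diff cpoly_fun.coord cpoly_fun.const)
  moreover have "l a = 1" "l b = 0" using i by (auto simp: l_def)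
  ultimately show ?thesis by blast
qed

text \<open>Real scaling on \<open>complex ^ 'n\<close> is complex scaling by a real number; hence a linear action
  acts by real-linear maps, which lets us use the library theory of \<open>linear\<close> maps.\<close>
lemma scaleR_as_vector_mult: "r *\<^sub>R (x :: complex ^ 'n) = complex_of_real r *s x"
  by (simp add: vec_eq_iff scaleR_conv_of_real[where 'a = complex])

lemma linear_action_linear: "linear_action G \<phi> \<Longrightarrow> g \<in> carrier G \<Longrightarrow> linear (\<phi> g)"
  by (intro linearI) (simp_all add: linear_action_def scaleR_as_vector_mult)

lemma linear_action_one: "linear_action G \<phi> \<Longrightarrow> \<phi> \<one>\<^bsub>G\<^esub> x = x"
  by (simp add: linear_action_def)

lemma linear_action_mult:
  "linear_action G \<phi> \<Longrightarrow> g \<in> carrier G \<Longrightarrow> h \<in> carrier G \<Longrightarrow> \<phi> (g \<otimes>\<^bsub>G\<^esub> h) x = \<phi> g (\<phi> h x)"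
  by (simp add: linear_action_def)

lemma linear_action_scale:
  "linear_action G \<phi> \<Longrightarrow> g \<in> carrier G \<Longrightarrow> \<phi> g (a *s x) = a *s \<phi> g x"
  by (simp add: linear_action_def)

lemma cpoly_fun_linear_action:
  assumes la: "linear_action G \<phi>" and g: "g \<in> carrier G"
  shows "cpoly_fun (\<lambda>x. \<phi> g x $ i)"
proof -
  have expansion: "\<phi> g x = (\<Sum>j\<in>UNIV. x $ j *s \<phi> g (axis j 1))" for x
  proof -
    have "\<phi> g x = \<phi> g (\<Sum>j\<in>UNIV. x $ j *s axis j 1)" by (simp add: basis_expansion)
    also have "\<dots> = (\<Sum>j\<in>UNIV. \<phi> g (x $ j *s axis j 1))"
      by (rule linear_sum[OF linear_action_linear[OF la g]])
    also have "\<dots> = (\<Sum>j\<in>UNIV. x $ j *s \<phi> g (axis j 1))"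
      by (simp add: linear_action_scale[OF la g])
    finally show ?thesis .
  qed
  have "cpoly_fun (\<lambda>x. \<Sum>j\<in>UNIV. x $ j * \<phi> g (axis j 1) $ i)"
    by (rule cpoly_fun_sum) (auto intro: cpoly_fun.intros)
  then show ?thesis by (subst expansion) simp
qed

lemma linear_action_bounded:
  assumes la: "linear_action G \<phi>" and fin: "finite (carrier G)"
  shows "\<exists>K\<ge>0. \<forall>g\<in>carrier G. \<forall>v. norm (\<phi> g v) \<le> K * norm v"
proof -
  have "\<forall>g\<in>carrier G. \<exists>B>0. \<forall>v. norm (\<phi> g v) \<le> B * norm v"
    using linear_bounded_pos[OF linear_action_linear[OF la]] by blast
  then obtain B where B: "\<forall>g\<in>carrier G. B g > 0 \<and> (\<forall>v. norm (\<phi> g v) \<le> B g * norm v)"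
    by (auto dest!: bchoice)
  define K where "K = (\<Sum>g\<in>carrier G. B g)"
  have "K \<ge> 0" unfolding K_def using B by (intro sum_nonneg) (auto intro: less_imp_le)
  moreover have "norm (\<phi> g v) \<le> K * norm v" if g: "g \<in> carrier G" for g v
  proof -
    have "norm (\<phi> g v) \<le> B g * norm v" using B g by blast
    also have "\<dots> \<le> K * norm v"
      unfolding K_def using B fin g by (intro mult_right_mono member_le_sum) (auto intro: less_imp_le)
    finally show ?thesis .
  qed
  ultimately show ?thesis by blast
qed

section \<open>The fibres of the Hilbert map are orbits\<close>

text \<open>If \<open>y\<close> is not in the orbit of \<open>x\<close>, the product over \<open>G\<close> of translates of a polynomial
  vanishing at \<open>x\<close> and equal to \<open>1\<close> on the orbit of \<open>y\<close> is an invariant polynomial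
  separating \<open>x\<close> and \<open>y\<close>; it factors through \<open>\<sigma>\<close>, so \<open>\<sigma> x \<noteq> \<sigma> y\<close>.\<close>
theorem hilbert_map_fibres_are_orbits:
  assumes G: "group G" and fin: "finite (carrier G)" and la: "linear_action G \<phi>"
    and h: "hilbert_map G \<phi> \<sigma>" and eq: "\<sigma> x = \<sigma> y"
  shows "\<exists>g\<in>carrier G. y = \<phi> g x"
proof (rule ccontr)
  assume not_orbit: "\<not> ?thesis"
  interpret group G by (rule G)
  define B where "B = (\<lambda>g. \<phi> g y) ` carrier G"
  have "x \<notin> B"
  proof
    assume "x \<in> B"
    then obtain k where k: "k \<in> carrier G" "x = \<phi> k y" unfolding B_def by blast
    then have "y = \<phi> (inv\<^bsub>G\<^esub> k) x"
      using la by (simp add: linear_action_mult[symmetric] linear_action_one)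
    then show False using not_orbit k by auto
  qed
  then have "\<forall>b\<in>B. \<exists>l. cpoly_fun l \<and> l x = 1 \<and> l b = 0"
    using cpoly_fun_separates_points by metis
  then obtain l where l: "\<And>b. b \<in> B \<Longrightarrow> cpoly_fun (l b) \<and> l b x = 1 \<and> l b b = 0"
    by metis
  define r where "r = (\<lambda>z. 1 - (\<Prod>b\<in>B. l b z))"
  define f where "f = (\<lambda>z. \<Prod>g\<in>carrier G. r (\<phi> g z))"
  have "cpoly_fun r"
    unfolding r_def by (rule cpoly_fun_diff[OF cpoly_fun.const cpoly_fun_prod]) (use l fin in \<open>auto simp: B_def\<close>)
  then have "cpoly_fun f"
    unfolding f_def by (rule cpoly_fun_prod[OF fin cpoly_fun_compose[OF _ cpoly_fun_linear_action[OF la]]])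
  moreover have "invariant_fun G \<phi> f"
    unfolding invariant_fun_def
  proof (intro ballI allI)
    fix k z assume k: "k \<in> carrier G"
    have "f (\<phi> k z) = (\<Prod>g\<in>carrier G. r (\<phi> (g \<otimes>\<^bsub>G\<^esub> k) z))"
      unfolding f_def using k la by (simp add: linear_action_mult)
    also have "\<dots> = f z" unfolding f_def
      by (rule prod.reindex_bij_witness[of _ "\<lambda>g. g \<otimes>\<^bsub>G\<^esub> inv\<^bsub>G\<^esub> k" "\<lambda>g. g \<otimes>\<^bsub>G\<^esub> k"])
         (use k in \<open>auto simp: m_assoc\<close>)
    finally show "f (\<phi> k z) = f z" .
  qed
  ultimately obtain P where "\<forall>z. f z = P (\<sigma> z)" using h unfolding hilbert_map_def by blast
  then have "f x = f y" using eq by simp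
  moreover have "f x = 0"
  proof -
    have "(\<Prod>b\<in>B. l b x) = 1" by (intro prod.neutral ballI) (simp add: l)
    then have "r (\<phi> \<one>\<^bsub>G\<^esub> x) = 0" unfolding r_def using la by (simp add: linear_action_one)
    then show ?thesis unfolding f_def using fin by (intro prod_zero) auto
  qed
  moreover have "f y = 1"
  proof -
    have finB: "finite B" unfolding B_def using fin by simp
    have "(\<Prod>b'\<in>B. l b' b) = 0" if "b \<in> B" for b
      by (rule prod_zero[OF finB bexI[of _ b]]) (use l that in simp_all)
    then have "r b = 1" if "b \<in> B" for b unfolding r_def using that by simp
    then show ?thesis unfolding f_def B_def by (intro prod.neutral) blast
  qed
  ultimately show False by simp
qed

section \<open>Norms on \<open>complex ^ 'n\<close>\<close>

context
  fixes N :: "complex ^ 'n \<Rightarrow> real"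
  assumes N: "is_norm N"
begin

lemma is_norm_zero: "N 0 = 0"
  using N by (simp add: is_norm_def)

lemma is_norm_triangle: "N (x + y) \<le> N x + N y"
  using N by (simp add: is_norm_def)

lemma is_norm_scale: "N (a *s x) = cmod a * N x"
  using N by (simp add: is_norm_def)

lemma is_norm_minus_commute: "N (x - y) = N (y - x)"
  using is_norm_scale[of "- 1" "x - y"] by (simp add: vec_eq_iff)

lemma is_norm_nonneg: "0 \<le> N x"
  using is_norm_triangle[of x "- x"] is_norm_minus_commute[of 0 x] by (simp add: is_norm_zero)

lemma is_norm_sum: "finite S \<Longrightarrow> N (\<Sum>i\<in>S. f i) \<le> (\<Sum>i\<in>S. N (f i))"
proof (induction S rule: finite_induct)
  case empty
  then show ?case by (simp add: is_norm_zero)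
next
  case (insert a S)
  then show ?case using is_norm_triangle[of "f a" "sum f S"] by simp
qed

lemma is_norm_upper_bound: "\<exists>C\<ge>0. \<forall>x. N x \<le> C * norm x"
proof (intro exI conjI allI)
  define C where "C = (\<Sum>j\<in>UNIV. N (axis j 1))"
  show "0 \<le> C" unfolding C_def by (intro sum_nonneg is_norm_nonneg)
  fix x
  have "N x = N (\<Sum>j\<in>UNIV. x $ j *s axis j 1)" by (simp add: basis_expansion)
  also have "\<dots> \<le> (\<Sum>j\<in>UNIV. N (x $ j *s axis j 1))" by (rule is_norm_sum) simp
  also have "\<dots> = (\<Sum>j\<in>UNIV. cmod (x $ j) * N (axis j 1))" by (simp add: is_norm_scale)
  also have "\<dots> \<le> (\<Sum>j\<in>UNIV. norm x * N (axis j 1))"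
    by (intro sum_mono mult_right_mono Finite_Cartesian_Product.norm_nth_le is_norm_nonneg)
  also have "\<dots> = C * norm x" by (simp add: C_def sum_distrib_left mult.commute)
  finally show "N x \<le> C * norm x" .
qed

text \<open>Lower comparison: \<open>N\<close> is continuous, so it attains a positive minimum on the unit sphere.\<close>
lemma is_norm_lower_bound: "\<exists>c>0. \<forall>x. c * norm x \<le> N x"
proof -
  obtain C where C: "C \<ge> 0" "\<And>x. N x \<le> C * norm x" using is_norm_upper_bound by blast
  have "C-lipschitz_on UNIV N"
  proof (rule lipschitz_onI)
    fix x y :: "complex ^ 'n"
    have "N x \<le> N y + N (x - y)" "N y \<le> N x + N (x - y)"
      using is_norm_triangle[of y "x - y"] is_norm_triangle[of x "y - x"]
      by (simp_all add: is_norm_minus_commute[of y])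
    then have "dist (N x) (N y) \<le> N (x - y)" by (simp add: dist_real_def abs_le_iff)
    also have "\<dots> \<le> C * dist x y" by (simp add: dist_norm C)
    finally show "dist (N x) (N y) \<le> C * dist x y" .
  qed (rule C)
  then have "continuous_on (sphere 0 1) N"
    using continuous_on_subset lipschitz_on_continuous_on by blast
  then obtain x0 :: "complex ^ 'n" where x0: "norm x0 = 1" "\<And>y. norm y = 1 \<Longrightarrow> N x0 \<le> N y"
    using continuous_attains_inf[of "sphere 0 1" N] by fastforce
  have "0 < N x0"
    using is_norm_nonneg[of x0] N x0(1) by (auto simp: is_norm_def le_less)
  moreover have "N x0 * norm x \<le> N x" for x
  proof (cases "x = 0")
    case False
    define w where "w = inverse (norm x) *\<^sub>R x"
    have "N x = N (norm x *\<^sub>R w)" using False by (simp add: w_def)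
    also have "\<dots> = norm x * N w" by (simp add: scaleR_as_vector_mult is_norm_scale)
    finally have "N x = norm x * N w" .
    moreover have "N x0 \<le> N w" using False by (intro x0(2)) (simp add: w_def)
    ultimately show ?thesis by (simp add: mult.commute mult_right_mono)
  qed (simp add: is_norm_zero)
  ultimately show ?thesis by blast
qed

lemma lipschitz_wrt_iff_lipschitz_on: "lipschitz_wrt N I f \<longleftrightarrow> (\<exists>L. L-lipschitz_on I f)"
proof
  assume "lipschitz_wrt N I f"
  then obtain L where L: "\<And>s t. s \<in> I \<Longrightarrow> t \<in> I \<Longrightarrow> N (f s - f t) \<le> L * \<bar>s - t\<bar>"
    unfolding lipschitz_wrt_def by blast
  obtain c where c: "c > 0" "\<And>x. c * norm x \<le> N x" using is_norm_lower_bound by blast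
  have "(\<bar>L\<bar> / c)-lipschitz_on I f"
  proof (rule lipschitz_onI)
    fix s t assume "s \<in> I" "t \<in> I"
    have "c * dist (f s) (f t) \<le> N (f s - f t)" using c(2) by (simp add: dist_norm)
    also have "\<dots> \<le> L * \<bar>s - t\<bar>" using L \<open>s \<in> I\<close> \<open>t \<in> I\<close> .
    also have "\<dots> \<le> \<bar>L\<bar> * dist s t" by (simp add: dist_real_def mult_right_mono)
    finally show "dist (f s) (f t) \<le> \<bar>L\<bar> / c * dist s t"
      using c(1) by (simp add: field_simps)
  qed (use c in simp)
  then show "\<exists>L. L-lipschitz_on I f" by blast
next
  assume "\<exists>L. L-lipschitz_on I f"
  then obtain L where L: "L-lipschitz_on I f" by blast
  obtain C where C: "C \<ge> 0" "\<And>x. N x \<le> C * norm x" using is_norm_upper_bound by blast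
  have "N (f s - f t) \<le> (C * L) * \<bar>s - t\<bar>" if "s \<in> I" "t \<in> I" for s t
  proof -
    have "N (f s - f t) \<le> C * dist (f s) (f t)" by (simp add: dist_norm C)
    also have "\<dots> \<le> C * (L * dist s t)" using lipschitz_onD[OF L that] C(1) by (rule mult_left_mono)
    finally show ?thesis by (simp add: dist_real_def mult.assoc)
  qed
  then show "lipschitz_wrt N I f" unfolding lipschitz_wrt_def by blast
qed

end

section \<open>From local to global Lipschitz estimates\<close>

text \<open>The connectedness argument is the library lemma
  \<open>locally_lipschitz_imp_lipschitz\<close>, applied to each compact subinterval.\<close>
lemma local_lipschitz_imp_lipschitz_on_interval:
  fixes f :: "real \<Rightarrow> 'a :: metric_space"
  assumes I: "is_interval I" and cont: "continuous_on I f" and M: "M \<ge> 0"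
    and near: "\<And>u. u \<in> I \<Longrightarrow> \<exists>\<delta>>0. \<forall>v\<in>I. \<bar>v - u\<bar> < \<delta> \<longrightarrow> dist (f v) (f u) \<le> M * \<bar>v - u\<bar>"
  shows "M-lipschitz_on I f"
proof (rule lipschitz_onI[OF _ M])
  have segment: "M-lipschitz_on {a..b} f" if ab: "a \<in> I" "b \<in> I" for a b
  proof -
    have sub: "{a..b} \<subseteq> I" using mem_is_interval_1_I[OF I ab] by auto
    show ?thesis
    proof (rule locally_lipschitz_imp_lipschitz[OF continuous_on_subset[OF cont sub] _ M])
      fix x y assume x: "x \<in> {a..<b}" and "y > x"
      have "x \<in> I" using sub x by auto
      then obtain \<delta> where \<delta>: "\<delta> > 0" "\<forall>v\<in>I. \<bar>v - x\<bar> < \<delta> \<longrightarrow> dist (f v) (f x) \<le> M * \<bar>v - x\<bar>"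
        using near by blast
      define z where "z = min (min y b) (x + \<delta> / 2)"
      have z: "z \<in> {x<..y}" "z \<in> I" "\<bar>z - x\<bar> < \<delta>"
        using x \<open>y > x\<close> \<delta>(1) sub by (auto simp: z_def)
      then show "\<exists>z\<in>{x<..y}. dist (f z) (f x) \<le> M * (z - x)" using \<delta>(2) by force
    qed
  qed
  fix s t assume "s \<in> I" "t \<in> I"
  then show "dist (f s) (f t) \<le> M * dist s t"
    using lipschitz_onD[OF segment[of s t], of s t] lipschitz_onD[OF segment[of t s], of s t]
    by (cases "s \<le> t") auto
qed

text \<open>If \<open>c_bar t\<close> lies in the orbit of \<open>c_tilde t\<close> for every \<open>t\<close>, then near each parameter \<open>u\<close>
  the group element relating the two lifts can be frozen: close to \<open>c_bar u\<close> there is no other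
  point of the finite orbit of \<open>c_tilde u\<close>.\<close>
lemma lift_locally_lipschitz:
  assumes la: "linear_action G \<phi>" and fin: "finite (carrier G)"
    and K: "K \<ge> 0" "\<And>g v. g \<in> carrier G \<Longrightarrow> norm (\<phi> g v) \<le> K * norm v"
    and lift: "\<And>t. t \<in> I \<Longrightarrow> \<exists>g\<in>carrier G. c_bar t = \<phi> g (c_tilde t)"
    and L: "L-lipschitz_on I c_tilde" and cont: "continuous_on I c_bar" and u: "u \<in> I"
  shows "\<exists>\<delta>>0. \<forall>v\<in>I. \<bar>v - u\<bar> < \<delta> \<longrightarrow> dist (c_bar v) (c_bar u) \<le> K * L * \<bar>v - u\<bar>"
proof -
  define x where "x = c_tilde u"
  obtain d where d: "d > 0" "\<And>g. g \<in> carrier G \<Longrightarrow> \<phi> g x \<noteq> c_bar u \<Longrightarrow> d \<le> dist (c_bar u) (\<phi> g x)"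
    using finite_set_avoid[of "(\<lambda>g. \<phi> g x) ` carrier G" "c_bar u"] fin by auto
  obtain \<delta>1 where \<delta>1: "\<delta>1 > 0" "\<And>v. v \<in> I \<Longrightarrow> dist v u < \<delta>1 \<Longrightarrow> dist (c_bar v) (c_bar u) < d / 2"
    using cont u d(1) unfolding continuous_on_iff by (metis half_gt_zero)
  have KL: "K * L \<ge> 0" using K(1) lipschitz_on_nonneg[OF L] by simp
  define \<delta> where "\<delta> = min \<delta>1 (d / (2 * (K * L + 1)))"
  have "\<delta> > 0" using \<delta>1(1) d(1) KL by (simp add: \<delta>_def)
  moreover have "dist (c_bar v) (c_bar u) \<le> K * L * \<bar>v - u\<bar>" if v: "v \<in> I" "\<bar>v - u\<bar> < \<delta>" for v
  proof -
    obtain g where g: "g \<in> carrier G" "c_bar v = \<phi> g (c_tilde v)" using lift[OF v(1)] by blast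
    define w where "w = \<phi> g (c_tilde v - x)"
    have w_eq: "w = c_bar v - \<phi> g x"
      unfolding w_def g(2) by (rule linear_diff[OF linear_action_linear[OF la g(1)]])
    have w_small: "norm w \<le> K * L * \<bar>v - u\<bar>"
    proof -
      have "norm w \<le> K * norm (c_tilde v - x)" unfolding w_def using K(2)[OF g(1)] .
      also have "\<dots> \<le> K * (L * \<bar>v - u\<bar>)"
        using lipschitz_onD[OF L v(1) u] K(1) by (intro mult_left_mono) (simp_all add: x_def dist_norm dist_real_def)
      finally show ?thesis by (simp add: mult.assoc)
    qed
    have "K * L * \<bar>v - u\<bar> \<le> K * L * (d / (2 * (K * L + 1)))"
      using v(2) KL by (intro mult_left_mono) (auto simp: \<delta>_def)
    also have "\<dots> < d / 2" using KL d(1) by (simp add: field_simps)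
    finally have w_lt: "norm w < d / 2" using w_small by linarith
    have "\<phi> g x = c_bar u"
    proof (rule ccontr)
      assume "\<phi> g x \<noteq> c_bar u"
      then have "d \<le> dist (c_bar u) (\<phi> g x)" using d(2)[OF g(1)] by blast
      also have "\<dots> = norm ((c_bar u - c_bar v) + w)" by (simp add: dist_norm w_eq)
      also have "\<dots> \<le> dist (c_bar v) (c_bar u) + norm w"
        using norm_triangle_ineq[of "c_bar u - c_bar v" w] by (simp add: dist_norm norm_minus_commute)
      also have "\<dots> < d" using \<delta>1(2)[OF v(1)] v(2) w_lt by (simp add: \<delta>_def dist_real_def)
      finally show False by simp
    qed
    then show ?thesis using w_small w_eq by (simp add: dist_norm)
  qed
  ultimately show ?thesis by blast
qed

theorem lemma5p3:
  fixes G :: "('g, 'b) monoid_scheme"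
    and \<phi> :: "'g \<Rightarrow> complex ^ 'n \<Rightarrow> complex ^ 'n"
    and \<sigma> :: "complex ^ 'n \<Rightarrow> complex ^ 'm"
    and N :: "complex ^ 'n \<Rightarrow> real"
    and I :: "real set"
    and c :: "real \<Rightarrow> complex ^ 'm"
    and c_tilde c_bar :: "real \<Rightarrow> complex ^ 'n"
  assumes "group G" and "finite (carrier G)"
    and "linear_action G \<phi>"
    and "hilbert_map G \<phi> \<sigma>"
    and "is_norm N"
    and "is_interval I"
    and "continuous_on I c" and "c ` I \<subseteq> range \<sigma>"
    and "\<forall>t\<in>I. \<sigma> (c_tilde t) = c t" and "lipschitz_wrt N I c_tilde"
    and "continuous_on I c_bar" and "\<forall>t\<in>I. \<sigma> (c_bar t) = c t"
  shows "lipschitz_wrt N I c_bar"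
proof -
  have lift: "\<exists>g\<in>carrier G. c_bar t = \<phi> g (c_tilde t)" if "t \<in> I" for t
    using hilbert_map_fibres_are_orbits[OF assms(1-4)] assms(9,12) that by simp
  obtain L where L: "L-lipschitz_on I c_tilde"
    using assms(10) lipschitz_wrt_iff_lipschitz_on[OF assms(5)] by blast
  obtain K where K: "K \<ge> 0" "\<forall>g\<in>carrier G. \<forall>v. norm (\<phi> g v) \<le> K * norm v"
    using linear_action_bounded[OF assms(3,2)] by blast
  have "(K * L)-lipschitz_on I c_bar"
  proof (rule local_lipschitz_imp_lipschitz_on_interval[OF assms(6,11)])
    show "K * L \<ge> 0" using K(1) lipschitz_on_nonneg[OF L] by simp
    show "\<exists>\<delta>>0. \<forall>v\<in>I. \<bar>v - u\<bar> < \<delta> \<longrightarrow> dist (c_bar v) (c_bar u) \<le> K * L * \<bar>v - u\<bar>"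
      if "u \<in> I" for u
      using lift_locally_lipschitz[OF assms(3,2) K(1) _ lift L assms(11) that] K(2) by blast
  qed
  then show ?thesis using lipschitz_wrt_iff_lipschitz_on[OF assms(5)] by blast
qed

end
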